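(* Consider a sequence of triples $(p,a,k)$ with $p$ prime, $p\to\infty$, $a\in\mathbb{Z}_p^\times$, $2\le k\le p-2$ and $\gcd(k,p-1)=1$. If $k=o(p/\log^8 p)$, then $D(\eta_{a,k})=o(p)$, i.e., the sequence $\eta_{a,k}$ is quasirandom.
   Context: $\eta_{a,k}$ is the permutation of $\mathbb{Z}_p$ given by $\eta_{a,k}(s)=as^k$. An interval of $\mathbb{Z}_n$ is any subset that is the image of an interval of consecutive integers under the projection $\mathbb{Z}\to\mathbb{Z}_n$ (wrap-around allowed). For $S,T\subseteq\mathbb{Z}_n$, $D_T(S)=\bigl|\,|S\cap T|-|S||T|/n\,\bigr|$, and for a permutation $\sigma$ of $\mathbb{Z}_n$, $D(\sigma)=\max_{I,J}D_J(\sigma(I))$ over all intervals $I,J$ of $\mathbb{Z}_n$. A sequence of permutations $\sigma$ of $\mathbb{Z}_{n}$ with $n\to\infty$ is quasirandom if $D(\sigma)=o(n)$. *)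

theory Defs
  imports Complex_Main "HOL-Library.Landau_Symbols" "HOL-Computational_Algebra.Primes"
begin

text \<open>Elements of Z_n are represented by the naturals 0..n-1.
  An interval of Z_n is the image of a block of consecutive integers under reduction mod n.\<close>
definition zn_interval :: "nat \<Rightarrow> nat set \<Rightarrow> bool" where
  "zn_interval n I \<longleftrightarrow> (\<exists>s len. I = (\<lambda>i. (s + i) mod n) ` {..<len})"

definition discr :: "nat \<Rightarrow> nat set \<Rightarrow> nat set \<Rightarrow> real" where
  "discr n T S = \<bar>real (card (S \<inter> T)) - real (card S) * real (card T) / real n\<bar>"

definition perm_discrepancy :: "nat \<Rightarrow> (nat \<Rightarrow> nat) \<Rightarrow> real" where
  "perm_discrepancy n \<sigma> =
     Max {discr n J (\<sigma> ` I) | I J. zn_interval n I \<and> zn_interval n J}"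

definition eta :: "nat \<Rightarrow> nat \<Rightarrow> nat \<Rightarrow> nat \<Rightarrow> nat" where
  "eta p a k s = (a * s ^ k) mod p"

end

theory Submission
  imports Defs "HOL-Number_Theory.Number_Theory" "HOL-Computational_Algebra.Polynomial"
begin

(*
  Write F_A(r) = sum_{y in A} e_p(-r y) and S(r, s) = sum_x e_p(r x + s sigma(x)). Fourier inversion
  on Z_p turns the number of x in I with sigma(x) in J into p^-2 sum_{r,s} F_I(r) F_J(s) S(r, s); the
  term (r, s) = (0, 0) is the expected count, so the discrepancy is at most
  max_{(r,s) <> 0} |S(r, s)| * (p^-1 sum_r |F_I(r)|) * (p^-1 sum_s |F_J(s)|), and for intervals each
  of the last two factors is O(log p).

  For sigma(x) = a x^k the substitution x -> t x gives |S(r, s)| = |S(r t, s t^k)| for every unit t,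
  and these p - 1 pairs are distinct, so (p - 1) |S(r, s)|^4 is bounded by the fourth moment
  sum_{r,s} |S|^4 = p^2 E. Here E counts x + y = u + v, x^k + y^k = u^k + v^k; for fixed (u, v) with
  u + v <> 0 the second equation is a nonzero polynomial equation of degree k in x, so E <= (k + 1) p^2.
  Altogether D <= (2 (k + 1) p^3)^(1/4) (4 + 3 log p)^2, which is o(p) when k = o(p / log^8 p).
*)

section \<open>Additive characters of Z_p\<close>

definition ep :: "nat \<Rightarrow> int \<Rightarrow> complex" where
  "ep p x = cis (2 * pi * of_int x / of_nat p)"

lemma ep_add: "ep p (x + y) = ep p x * ep p y"
  by (simp add: ep_def cis_mult add_divide_distrib distrib_left)

lemma ep_0 [simp]: "ep p 0 = 1"
  by (simp add: ep_def)

lemma norm_ep [simp]: "norm (ep p x) = 1"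
  by (simp add: ep_def)

lemma cnj_ep: "cnj (ep p x) = ep p (- x)"
  by (simp add: ep_def cis_cnj)

lemma ep_pow: "ep p x ^ n = ep p (int n * x)"
  by (simp add: ep_def DeMoivre algebra_simps)

lemma ep_multiple [simp]: "ep p (int p * q) = 1"
proof (cases "p = 0")
  case False
  then have "2 * pi * of_int (int p * q) / of_nat p = 2 * pi * of_int q"
    by (simp add: field_simps)
  then show ?thesis by (simp add: ep_def)
qed simp

lemma ep_cong:
  assumes "[x = y] (mod int p)"
  shows "ep p x = ep p y"
proof -
  obtain q where "x = y + int p * q"
    using assms by (metis cong_iff_lin cong_sym)
  then show ?thesis by (simp add: ep_add)
qed

lemma ep_cong_nat: "[x = y] (mod p) \<Longrightarrow> ep p (int x) = ep p (int y)"
  by (rule ep_cong) (simp add: cong_int_iff)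

lemma ep_eq_1_iff:
  assumes "p > 0"
  shows "ep p x = 1 \<longleftrightarrow> int p dvd x"
proof
  assume "ep p x = 1"
  then have "cis (2 * pi * of_int x / of_nat p) = cis 0" by (simp add: ep_def)
  then have "sin (2 * pi * of_int x / of_nat p) = sin 0 \<and> cos (2 * pi * of_int x / of_nat p) = cos 0"
    by (metis cis.sel)
  then obtain n :: int where "2 * pi * of_int x / of_nat p = 0 + 2 * pi * n"
    using sin_cos_eq_iff by blast
  then have "of_int x = real p * of_int n" using assms by (simp add: field_simps)
  then have "x = int p * n" by (metis of_int_eq_iff of_int_mult of_int_of_nat_eq)
  then show "int p dvd x" by simp
qed auto

lemma sum_ep_orthogonality:
  assumes "p > 0"
  shows "(\<Sum>r<p. ep p (int r * x)) = (if int p dvd x then of_nat p else 0)"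
proof (cases "int p dvd x")
  case True
  then have "ep p (int r * x) = 1" for r
    using ep_cong[of "int r * x" 0 p] by (simp add: cong_0_iff)
  then show ?thesis using True by simp
next
  case False
  define w where "w = ep p x"
  have "w \<noteq> 1" "w ^ p = 1"
    using False ep_eq_1_iff[OF assms] by (simp_all add: w_def ep_pow)
  then have "(\<Sum>r<p. w ^ r) = 0" by (simp add: sum_gp_strict)
  then show ?thesis using False by (simp add: w_def ep_pow)
qed

lemma sum_ep_diff:
  assumes "p > 0"
  shows "(\<Sum>r<p. ep p (int r * (int x - int y))) = (if [x = y] (mod p) then of_nat p else 0)"
  using sum_ep_orthogonality[OF assms] by (simp add: cong_int_iff [symmetric] cong_iff_dvd_diff)

section \<open>Fourier expansion of the discrepancy\<close>

definition set_fourier :: "nat \<Rightarrow> nat set \<Rightarrow> nat \<Rightarrow> complex" where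
  "set_fourier p A r = (\<Sum>y\<in>A. ep p (- (int r * int y)))"

definition graph_fourier :: "nat \<Rightarrow> (nat \<Rightarrow> nat) \<Rightarrow> nat \<Rightarrow> nat \<Rightarrow> complex" where
  "graph_fourier p \<sigma> r s = (\<Sum>x<p. ep p (int r * int x + int s * int (\<sigma> x)))"

lemma set_fourier_inversion:
  assumes "p > 0" "A \<subseteq> {..<p}" "x < p"
  shows "(\<Sum>r<p. set_fourier p A r * ep p (int r * int x)) = (if x \<in> A then of_nat p else 0)"
proof -
  have "(\<Sum>r<p. set_fourier p A r * ep p (int r * int x))
      = (\<Sum>y\<in>A. \<Sum>r<p. ep p (int r * (int x - int y)))"
    unfolding set_fourier_def sum_distrib_right
    by (subst sum.swap) (simp add: ep_add [symmetric] algebra_simps)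
  also have "\<dots> = (\<Sum>y\<in>A. if x = y then of_nat p else 0)"
    using assms by (intro sum.cong refl) (auto simp: sum_ep_diff cong_less_modulus_unique_nat)
  also have "\<dots> = (if x \<in> A then of_nat p else 0)"
    using finite_subset[OF assms(2)] by (simp add: sum.delta)
  finally show ?thesis .
qed

lemma count_fourier_expansion:
  assumes p: "p > 0" and I: "I \<subseteq> {..<p}" and J: "J \<subseteq> {..<p}"
    and \<sigma>: "\<And>x. x < p \<Longrightarrow> \<sigma> x < p"
  shows "(\<Sum>r<p. \<Sum>s<p. set_fourier p I r * set_fourier p J s * graph_fourier p \<sigma> r s)
    = of_nat p ^ 2 * of_nat (card {x\<in>I. \<sigma> x \<in> J})"
proof -
  have "(\<Sum>r<p. \<Sum>s<p. set_fourier p I r * set_fourier p J s * graph_fourier p \<sigma> r s)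
      = (\<Sum>x<p. (\<Sum>r<p. set_fourier p I r * ep p (int r * int x))
              * (\<Sum>s<p. set_fourier p J s * ep p (int s * int (\<sigma> x))))"
  proof -
    have "set_fourier p I r * set_fourier p J s * graph_fourier p \<sigma> r s
        = (\<Sum>x<p. (set_fourier p I r * ep p (int r * int x))
                  * (set_fourier p J s * ep p (int s * int (\<sigma> x))))" for r s
      by (simp add: graph_fourier_def sum_distrib_left ep_add mult_ac)
    then have "(\<Sum>r<p. \<Sum>s<p. set_fourier p I r * set_fourier p J s * graph_fourier p \<sigma> r s)
        = (\<Sum>r<p. \<Sum>s<p. \<Sum>x<p. (set_fourier p I r * ep p (int r * int x))
                  * (set_fourier p J s * ep p (int s * int (\<sigma> x))))"
      by (simp only:)
    also have "\<dots> = (\<Sum>r<p. \<Sum>x<p. \<Sum>s<p. (set_fourier p I r * ep p (int r * int x))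
                  * (set_fourier p J s * ep p (int s * int (\<sigma> x))))"
      by (rule sum.cong[OF refl], rule sum.swap)
    also have "\<dots> = (\<Sum>x<p. \<Sum>r<p. \<Sum>s<p. (set_fourier p I r * ep p (int r * int x))
                  * (set_fourier p J s * ep p (int s * int (\<sigma> x))))"
      by (rule sum.swap)
    finally show ?thesis by (simp only: sum_product)
  qed
  also have "\<dots> = (\<Sum>x<p. if x \<in> I \<and> \<sigma> x \<in> J then of_nat p ^ 2 else 0)"
    using assms by (intro sum.cong refl) (simp add: set_fourier_inversion power2_eq_square)
  also have "\<dots> = of_nat p ^ 2 * of_nat (card {x\<in>I. \<sigma> x \<in> J})"
  proof -
    have "{x\<in>{..<p}. x \<in> I \<and> \<sigma> x \<in> J} = {x\<in>I. \<sigma> x \<in> J}" using I by auto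
    then show ?thesis by (simp add: sum.If_cases Int_def)
  qed
  finally show ?thesis .
qed

lemma count_deviation_fourier:
  assumes p: "p > 0" and I: "I \<subseteq> {..<p}" and J: "J \<subseteq> {..<p}"
    and \<sigma>: "\<And>x. x < p \<Longrightarrow> \<sigma> x < p"
  shows "of_nat p ^ 2 * of_nat (card {x\<in>I. \<sigma> x \<in> J}) - of_nat (card I * card J * p)
    = (\<Sum>z\<in>{..<p} \<times> {..<p} - {(0, 0)}.
         set_fourier p I (fst z) * set_fourier p J (snd z) * graph_fourier p \<sigma> (fst z) (snd z))"
proof -
  let ?T = "\<lambda>z. set_fourier p I (fst z) * set_fourier p J (snd z) * graph_fourier p \<sigma> (fst z) (snd z)"
  have "of_nat p ^ 2 * of_nat (card {x\<in>I. \<sigma> x \<in> J}) = (\<Sum>z\<in>{..<p} \<times> {..<p}. ?T z)"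
    using count_fourier_expansion[OF assms] by (simp add: sum.cartesian_product split_def)
  also have "\<dots> = ?T (0, 0) + (\<Sum>z\<in>{..<p} \<times> {..<p} - {(0, 0)}. ?T z)"
    using p by (intro sum.remove) auto
  also have "?T (0, 0) = of_nat (card I * card J * p)"
    by (simp add: set_fourier_def graph_fourier_def)
  finally show ?thesis by simp
qed

lemma count_deviation_le:
  assumes p: "p > 0" and \<sigma>: "\<And>x. x < p \<Longrightarrow> \<sigma> x < p"
    and I: "I \<subseteq> {..<p}" and J: "J \<subseteq> {..<p}"
    and M: "0 \<le> M" "\<And>r s. r < p \<Longrightarrow> s < p \<Longrightarrow> (r, s) \<noteq> (0, 0) \<Longrightarrow> norm (graph_fourier p \<sigma> r s) \<le> M"
  shows "\<bar>real p ^ 2 * real (card {x\<in>I. \<sigma> x \<in> J}) - real (card I * card J * p)\<bar>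
    \<le> M * (\<Sum>r<p. norm (set_fourier p I r)) * (\<Sum>s<p. norm (set_fourier p J s))"
proof -
  let ?c = "card {x\<in>I. \<sigma> x \<in> J}"
  have "(of_nat p ^ 2 * of_nat ?c - of_nat (card I * card J * p) :: complex)
      = of_real (real p ^ 2 * real ?c - real (card I * card J * p))"
    by simp
  then have "\<bar>real p ^ 2 * real ?c - real (card I * card J * p)\<bar>
      = norm (of_nat p ^ 2 * of_nat ?c - of_nat (card I * card J * p) :: complex)"
    by (simp only: norm_of_real)
  also have "\<dots> = norm (\<Sum>z\<in>{..<p} \<times> {..<p} - {(0, 0)}.
      set_fourier p I (fst z) * set_fourier p J (snd z) * graph_fourier p \<sigma> (fst z) (snd z))"
    by (simp only: count_deviation_fourier[OF p I J \<sigma>])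
  also have "\<dots> \<le> (\<Sum>z\<in>{..<p} \<times> {..<p} - {(0, 0)}.
      norm (set_fourier p I (fst z)) * norm (set_fourier p J (snd z)) * norm (graph_fourier p \<sigma> (fst z) (snd z)))"
    by (rule order.trans[OF norm_sum]) (simp add: norm_mult)
  also have "\<dots> \<le> (\<Sum>z\<in>{..<p} \<times> {..<p}. norm (set_fourier p I (fst z)) * norm (set_fourier p J (snd z)) * M)"
    using M by (intro order.trans[OF sum_mono sum_mono2]) (auto intro: mult_left_mono)
  also have "\<dots> = M * (\<Sum>r<p. norm (set_fourier p I r)) * (\<Sum>s<p. norm (set_fourier p J s))"
    by (simp add: sum.cartesian_product sum_product sum_distrib_left split_def mult_ac)
  finally show ?thesis .
qed

lemma discr_image_le:
  assumes p: "p > 0" and \<sigma>: "\<And>x. x < p \<Longrightarrow> \<sigma> x < p" "inj_on \<sigma> {..<p}"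
    and I: "I \<subseteq> {..<p}" and J: "J \<subseteq> {..<p}"
    and M: "0 \<le> M" "\<And>r s. r < p \<Longrightarrow> s < p \<Longrightarrow> (r, s) \<noteq> (0, 0) \<Longrightarrow> norm (graph_fourier p \<sigma> r s) \<le> M"
  shows "discr p J (\<sigma> ` I)
    \<le> M * (\<Sum>r<p. norm (set_fourier p I r)) * (\<Sum>s<p. norm (set_fourier p J s)) / real p ^ 2"
proof -
  let ?c = "card {x\<in>I. \<sigma> x \<in> J}"
  have inj: "inj_on \<sigma> I" using inj_on_subset[OF \<sigma>(2) I] .
  have "\<sigma> ` I \<inter> J = \<sigma> ` {x\<in>I. \<sigma> x \<in> J}" by auto
  then have "card (\<sigma> ` I \<inter> J) = ?c"
    using inj_on_subset[OF inj] by (simp add: card_image)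
  moreover have "card (\<sigma> ` I) = card I"
    using inj by (simp add: card_image)
  moreover have "real p ^ 2 * real ?c - real (card I * card J * p)
      = real p ^ 2 * (real ?c - real (card I) * real (card J) / real p)"
    using p by (simp add: field_simps power2_eq_square)
  ultimately have "discr p J (\<sigma> ` I) = \<bar>real p ^ 2 * real ?c - real (card I * card J * p)\<bar> / real p ^ 2"
    using p by (simp add: discr_def abs_mult)
  then show ?thesis
    using count_deviation_le[OF p \<sigma>(1) I J M] p by (simp add: divide_right_mono)
qed

lemma zn_interval_empty: "zn_interval p {}"
  unfolding zn_interval_def by (intro exI[of _ 0]) simp

lemma finite_discr_values:
  assumes "p > 0"
  shows "finite {discr p J (\<sigma> ` I) | I J. zn_interval p I \<and> zn_interval p J}"
proof (rule finite_subset)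
  show "{discr p J (\<sigma> ` I) | I J. zn_interval p I \<and> zn_interval p J}
      \<subseteq> (\<lambda>(I, J). discr p J (\<sigma> ` I)) ` (Pow {..<p} \<times> Pow {..<p})"
    using assms by (fastforce simp: zn_interval_def)
qed simp

lemma perm_discrepancy_nonneg:
  assumes "p > 0"
  shows "0 \<le> perm_discrepancy p \<sigma>"
proof -
  have "discr p {} (\<sigma> ` {}) \<le> perm_discrepancy p \<sigma>"
    unfolding perm_discrepancy_def
    by (intro Max_ge finite_discr_values[OF assms]) (blast intro: zn_interval_empty)
  then show ?thesis by (simp add: discr_def)
qed

lemma perm_discrepancy_le:
  assumes "p > 0" "\<And>I J. zn_interval p I \<Longrightarrow> zn_interval p J \<Longrightarrow> discr p J (\<sigma> ` I) \<le> B"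
  shows "perm_discrepancy p \<sigma> \<le> B"
  unfolding perm_discrepancy_def
  using assms zn_interval_empty by (subst Max_le_iff[OF finite_discr_values]) blast+

section \<open>Fourier coefficients of intervals\<close>

lemma sin_ge_div_3:
  fixes y :: real
  assumes "0 \<le> y" "y \<le> 2"
  shows "y / 3 \<le> sin y"
proof -
  have "\<bar>sin y - (\<Sum>m<3. sin_coeff m * y ^ m)\<bar> \<le> inverse (fact 3) * \<bar>y\<bar> ^ 3"
    by (rule Maclaurin_sin_bound)
  moreover have "(\<Sum>m<3. sin_coeff m * y ^ m) = y"
    by (simp add: numeral_3_eq_3 sin_coeff_def)
  ultimately have "\<bar>sin y - y\<bar> \<le> y ^ 3 / 6"
    using assms by (simp add: numeral_3_eq_3)
  then have "y - y ^ 3 / 6 \<le> sin y"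
    by (simp only: abs_le_iff) linarith
  moreover have "y * y ^ 2 \<le> y * 4"
    using assms mult_mono[of y 2 y 2] by (intro mult_left_mono) (simp_all add: power2_eq_square)
  ultimately show ?thesis by (simp add: power3_eq_cube power2_eq_square)
qed

lemma norm_1_minus_cis: "norm (1 - cis t) = 2 * \<bar>sin (t / 2)\<bar>"
proof (rule power2_eq_imp_eq)
  have "(norm (1 - cis t))\<^sup>2 = (1 - cos t)\<^sup>2 + (sin t)\<^sup>2"
    by (simp add: cmod_power2)
  also have "\<dots> = 2 - 2 * cos t"
    by (simp add: power2_eq_square algebra_simps)
  also have "\<dots> = (2 * \<bar>sin (t / 2)\<bar>)\<^sup>2"
    using cos_double_sin[of "t / 2"] by (simp add: power2_eq_square)
  finally show "(norm (1 - cis t))\<^sup>2 = (2 * \<bar>sin (t / 2)\<bar>)\<^sup>2" .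
qed simp_all

lemma norm_1_minus_ep_ge:
  assumes "0 < r" "r < p"
  shows "4 * real (min r (p - r)) / (3 * real p) \<le> norm (1 - ep p (- int r))"
proof -
  define y where "y = pi * real (min r (p - r)) / real p"
  have "sin (pi * real r / real p) = sin y"
  proof (cases "r \<le> p - r")
    case False
    then have "y = pi - pi * real r / real p"
      using assms by (simp add: y_def of_nat_diff field_simps)
    then show ?thesis by simp
  qed (simp add: y_def)
  moreover have y: "0 \<le> y" "y \<le> 2"
  proof -
    have "real (min r (p - r)) \<le> real p / 2" by linarith
    then have "y \<le> pi / 2" using assms by (simp add: y_def field_simps)
    then show "y \<le> 2" using pi_less_4 by linarith
  qed (simp add: y_def)
  moreover have "0 \<le> sin y" using y pi_ge_two by (intro sin_ge_zero) linarith+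
  ultimately have "norm (1 - ep p (- int r)) = 2 * sin y"
    by (simp add: ep_def norm_1_minus_cis)
  moreover have "4 * real (min r (p - r)) / (3 * real p) \<le> 2 * (y / 3)"
    using pi_ge_two assms by (simp add: y_def field_simps)
  ultimately show ?thesis using sin_ge_div_3[OF y] by linarith
qed

lemma norm_sum_power_le:
  fixes w :: complex
  assumes "norm w = 1" "w \<noteq> 1"
  shows "norm (\<Sum>i<L. w ^ i) \<le> 2 / norm (1 - w)"
proof -
  have "norm (\<Sum>i<L. w ^ i) = norm (1 - w ^ L) / norm (1 - w)"
    using assms by (simp add: sum_gp_strict norm_divide)
  also have "norm (1 - w ^ L) \<le> 2"
    using norm_triangle_ineq4[of 1 "w ^ L"] assms by (simp add: norm_power)
  then have "norm (1 - w ^ L) / norm (1 - w) \<le> 2 / norm (1 - w)"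
    by (simp add: divide_right_mono)
  finally show ?thesis .
qed

lemma zn_interval_short:
  assumes "p > 0" "zn_interval p I"
  obtains s L where "L \<le> p" "I = (\<lambda>i. (s + i) mod p) ` {..<L}"
proof -
  obtain s len where I: "I = (\<lambda>i. (s + i) mod p) ` {..<len}"
    using assms(2) by (auto simp: zn_interval_def)
  have "(\<lambda>i. (s + i) mod p) ` {..<len} = (\<lambda>i. (s + i) mod p) ` {..<min len p}"
  proof
    show "(\<lambda>i. (s + i) mod p) ` {..<len} \<subseteq> (\<lambda>i. (s + i) mod p) ` {..<min len p}"
    proof
      fix y assume "y \<in> (\<lambda>i. (s + i) mod p) ` {..<len}"
      then obtain i where "i < len" "y = (s + i) mod p" by auto
      then have "y = (s + i mod p) mod p" "i mod p < min len p"
        using assms(1) order.strict_trans1[OF mod_less_eq_dividend, of i len p]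
        by (auto simp: mod_add_right_eq min_def)
      then show "y \<in> (\<lambda>i. (s + i) mod p) ` {..<min len p}" by blast
    qed
  qed (intro image_mono, auto)
  then show ?thesis using that I by (metis min.cobounded2)
qed

lemma norm_set_fourier_interval:
  assumes "L \<le> p"
  shows "norm (set_fourier p ((\<lambda>i. (s + i) mod p) ` {..<L}) r) = norm (\<Sum>i<L. ep p (- int r) ^ i)"
proof -
  have "inj_on (\<lambda>i. (s + i) mod p) {..<L}"
    using assms by (intro inj_onI) (simp add: cong_def [symmetric] cong_add_lcancel_nat
        cong_less_modulus_unique_nat)
  then have "set_fourier p ((\<lambda>i. (s + i) mod p) ` {..<L}) r
      = (\<Sum>i<L. ep p (- (int r * int ((s + i) mod p))))"
    by (simp add: set_fourier_def sum.reindex)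
  also have "\<dots> = ep p (- (int r * int s)) * (\<Sum>i<L. ep p (- int r) ^ i)"
    unfolding sum_distrib_left
  proof (rule sum.cong [OF refl])
    fix i
    have "[- (int r * int ((s + i) mod p)) = - (int r * int (s + i))] (mod int p)"
      by (intro cong_minus_minus_iff[THEN iffD2] cong_mult cong_refl) (simp add: cong_def zmod_int)
    then show "ep p (- (int r * int ((s + i) mod p))) = ep p (- (int r * int s)) * ep p (- int r) ^ i"
      by (simp add: ep_cong ep_pow ep_add [symmetric] algebra_simps)
  qed
  finally show ?thesis by (simp add: norm_mult)
qed

lemma norm_set_fourier_interval_le:
  assumes "L \<le> p" "0 < r" "r < p"
  shows "norm (set_fourier p ((\<lambda>i. (s + i) mod p) ` {..<L}) r)
    \<le> 3 * real p / 2 * (1 / real r + 1 / real (p - r))"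
proof -
  define w where "w = ep p (- int r)"
  have "norm (set_fourier p ((\<lambda>i. (s + i) mod p) ` {..<L}) r) \<le> 2 / norm (1 - w)"
    unfolding norm_set_fourier_interval[OF assms(1)] w_def
    using assms by (intro norm_sum_power_le) (auto simp: ep_eq_1_iff dest: zdvd_imp_le)
  also have "\<dots> \<le> 2 / (4 * real (min r (p - r)) / (3 * real p))"
  proof (rule divide_left_mono)
    show "4 * real (min r (p - r)) / (3 * real p) \<le> norm (1 - w)"
      using norm_1_minus_ep_ge[OF assms(2,3)] by (simp add: w_def)
    moreover have "0 < 4 * real (min r (p - r)) / (3 * real p)" using assms by simp
    ultimately show "0 < norm (1 - w) * (4 * real (min r (p - r)) / (3 * real p))"
      by (intro mult_pos_pos) linarith+
  qed simp
  also have "\<dots> \<le> 3 * real p / 2 * (1 / real r + 1 / real (p - r))"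
    by (simp add: min_def field_simps)
  finally show ?thesis .
qed

lemma sum_inverse_le_1_plus_ln:
  assumes "1 \<le> n"
  shows "(\<Sum>r = 1..n. 1 / real r) \<le> 1 + ln (real n)"
  using assms
proof (induction n rule: dec_induct)
  case (step n)
  have "1 / real (Suc n) \<le> ln (real (Suc n)) - ln (real n)"
    using step ln_le_minus_one[of "real n / real (Suc n)"]
    by (simp add: ln_div field_simps)
  then show ?case using step by simp
qed simp

lemma sum_norm_set_fourier_interval_le:
  assumes "p > 0" "zn_interval p I"
  shows "(\<Sum>r<p. norm (set_fourier p I r)) \<le> real p * (4 + 3 * ln (real p))"
proof -
  obtain s L where L: "L \<le> p" and I: "I = (\<lambda>i. (s + i) mod p) ` {..<L}"
    using zn_interval_short[OF assms] .
  have "I \<subseteq> {..<p}" using assms(1) by (auto simp: I)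
  then have "norm (set_fourier p I 0) \<le> real p"
    using card_mono[OF finite_lessThan] by (fastforce simp: set_fourier_def)
  have "(\<Sum>r\<in>{1..<p}. norm (set_fourier p I r)) \<le> (\<Sum>r\<in>{1..<p}. 3 * real p / 2 * (1 / real r + 1 / real (p - r)))"
    using norm_set_fourier_interval_le[OF L] by (intro sum_mono) (simp add: I)
  also have "\<dots> = 3 * real p * (\<Sum>r\<in>{1..<p}. 1 / real r)"
  proof -
    have "(\<Sum>r\<in>{1..<p}. 1 / real (p - r)) = (\<Sum>r\<in>{1..<p}. 1 / real r)"
      by (rule sum.reindex_bij_witness[of _ "\<lambda>r. p - r" "\<lambda>r. p - r"]) auto
    then show ?thesis by (simp only: sum_distrib_left [symmetric] sum.distrib) simp
  qed
  also have "\<dots> \<le> 3 * real p * (1 + ln (real p))"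
  proof (intro mult_left_mono)
    have "(\<Sum>r\<in>{1..<p}. 1 / real r) \<le> (\<Sum>r = 1..p. 1 / real r)"
      by (intro sum_mono2) auto
    also have "\<dots> \<le> 1 + ln (real p)"
      using assms(1) by (intro sum_inverse_le_1_plus_ln) simp
    finally show "(\<Sum>r\<in>{1..<p}. 1 / real r) \<le> 1 + ln (real p)" .
  qed simp
  finally have "(\<Sum>r\<in>{1..<p}. norm (set_fourier p I r)) \<le> 3 * real p * (1 + ln (real p))"
    by simp
  moreover have "{..<p} = insert 0 {1..<p}" using assms(1) by auto
  ultimately show ?thesis
    using \<open>norm (set_fourier p I 0) \<le> real p\<close> by (simp add: algebra_simps)
qed

section \<open>Fourth moment and additive energy\<close>

lemma of_real_norm_sum_ep_square:
  "complex_of_real ((norm (\<Sum>x\<in>X. ep p (f x)))\<^sup>2) = (\<Sum>x\<in>X. \<Sum>y\<in>X. ep p (f x - f y))"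
proof -
  have "complex_of_real ((norm (\<Sum>x\<in>X. ep p (f x)))\<^sup>2)
      = (\<Sum>x\<in>X. ep p (f x)) * cnj (\<Sum>x\<in>X. ep p (f x))"
    by (rule complex_norm_square)
  also have "\<dots> = (\<Sum>x\<in>X. \<Sum>y\<in>X. ep p (f x - f y))"
    by (simp add: cnj_sum cnj_ep sum_product ep_add [symmetric])
  finally show ?thesis .
qed

lemma parseval_pairs:
  fixes \<alpha> \<beta> :: "'a \<Rightarrow> nat"
  assumes p: "p > 0" and X: "finite X"
  shows "(\<Sum>r<p. \<Sum>s<p. (norm (\<Sum>x\<in>X. ep p (int r * int (\<alpha> x) + int s * int (\<beta> x))))\<^sup>2)
    = real p ^ 2 * real (card {(x, y) \<in> X \<times> X. [\<alpha> x = \<alpha> y] (mod p) \<and> [\<beta> x = \<beta> y] (mod p)})"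
proof -
  let ?T = "\<lambda>x y r s. ep p (int r * (int (\<alpha> x) - int (\<alpha> y))) * ep p (int s * (int (\<beta> x) - int (\<beta> y)))"
  have sq: "complex_of_real ((norm (\<Sum>x\<in>X. ep p (int r * int (\<alpha> x) + int s * int (\<beta> x))))\<^sup>2)
      = (\<Sum>x\<in>X. \<Sum>y\<in>X. ?T x y r s)" for r s
    by (subst of_real_norm_sum_ep_square) (simp add: ep_add [symmetric] algebra_simps)
  have "complex_of_real (\<Sum>r<p. \<Sum>s<p. (norm (\<Sum>x\<in>X. ep p (int r * int (\<alpha> x) + int s * int (\<beta> x))))\<^sup>2)
      = (\<Sum>r<p. \<Sum>s<p. \<Sum>x\<in>X. \<Sum>y\<in>X. ?T x y r s)"
    by (simp only: of_real_sum sq)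
  also have "\<dots> = (\<Sum>x\<in>X. \<Sum>y\<in>X. (\<Sum>r<p. ep p (int r * (int (\<alpha> x) - int (\<alpha> y))))
                               * (\<Sum>s<p. ep p (int s * (int (\<beta> x) - int (\<beta> y)))))"
  proof -
    have "(\<Sum>r<p. \<Sum>s<p. \<Sum>x\<in>X. \<Sum>y\<in>X. ?T x y r s) = (\<Sum>r<p. \<Sum>x\<in>X. \<Sum>y\<in>X. \<Sum>s<p. ?T x y r s)"
      by (rule sum.cong[OF refl], subst sum.swap, rule sum.cong[OF refl], rule sum.swap)
    also have "\<dots> = (\<Sum>x\<in>X. \<Sum>y\<in>X. \<Sum>r<p. \<Sum>s<p. ?T x y r s)"
      by (subst sum.swap, rule sum.cong[OF refl], rule sum.swap)
    finally show ?thesis by (simp only: sum_product)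
  qed
  also have "\<dots> = (\<Sum>(x, y)\<in>X \<times> X. if [\<alpha> x = \<alpha> y] (mod p) \<and> [\<beta> x = \<beta> y] (mod p) then of_nat p ^ 2 else 0)"
    by (simp add: sum_ep_diff[OF p] sum.cartesian_product split_def)
       (intro sum.cong refl, simp add: power2_eq_square)
  also have "\<dots> = of_real (real p ^ 2 * real (card {(x, y) \<in> X \<times> X. [\<alpha> x = \<alpha> y] (mod p) \<and> [\<beta> x = \<beta> y] (mod p)}))"
  proof -
    have "{z \<in> X \<times> X. [\<alpha> (fst z) = \<alpha> (snd z)] (mod p) \<and> [\<beta> (fst z) = \<beta> (snd z)] (mod p)}
        = {(x, y) \<in> X \<times> X. [\<alpha> x = \<alpha> y] (mod p) \<and> [\<beta> x = \<beta> y] (mod p)}"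
      by auto
    then show ?thesis using X by (simp add: sum.If_cases split_def Int_def)
  qed
  finally show ?thesis by (simp only: of_real_eq_iff)
qed

definition sum_collision :: "nat \<Rightarrow> (nat \<Rightarrow> nat) \<Rightarrow> nat \<times> nat \<Rightarrow> nat \<times> nat \<Rightarrow> bool" where
  "sum_collision p \<sigma> z w \<longleftrightarrow>
     [fst z + snd z = fst w + snd w] (mod p) \<and>
     [\<sigma> (fst z) + \<sigma> (snd z) = \<sigma> (fst w) + \<sigma> (snd w)] (mod p)"

definition graph_energy :: "nat \<Rightarrow> (nat \<Rightarrow> nat) \<Rightarrow> nat" where
  "graph_energy p \<sigma> =
     card {(z, w) \<in> ({..<p} \<times> {..<p}) \<times> ({..<p} \<times> {..<p}). sum_collision p \<sigma> z w}"

lemma graph_fourier_square: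
  "graph_fourier p \<sigma> r s ^ 2 =
     (\<Sum>z\<in>{..<p} \<times> {..<p}. ep p (int r * int (fst z + snd z) + int s * int (\<sigma> (fst z) + \<sigma> (snd z))))"
  by (simp add: graph_fourier_def power2_eq_square sum_product sum.cartesian_product
      split_def ep_add [symmetric] algebra_simps)

lemma fourth_moment_graph_fourier:
  assumes "p > 0"
  shows "(\<Sum>r<p. \<Sum>s<p. norm (graph_fourier p \<sigma> r s) ^ 4) = real p ^ 2 * real (graph_energy p \<sigma>)"
proof -
  have "norm (graph_fourier p \<sigma> r s) ^ 4 = (norm (graph_fourier p \<sigma> r s ^ 2))\<^sup>2" for r s
    by (simp add: norm_power flip: power_mult)
  then have "(\<Sum>r<p. \<Sum>s<p. norm (graph_fourier p \<sigma> r s) ^ 4)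
      = (\<Sum>r<p. \<Sum>s<p. (norm (\<Sum>z\<in>{..<p} \<times> {..<p}.
           ep p (int r * int (fst z + snd z) + int s * int (\<sigma> (fst z) + \<sigma> (snd z)))))\<^sup>2)"
    by (simp only: graph_fourier_square)
  also have "\<dots> = real p ^ 2 * real (graph_energy p \<sigma>)"
    unfolding graph_energy_def sum_collision_def
    by (rule parseval_pairs[OF assms, of _ "\<lambda>z. fst z + snd z" "\<lambda>z. \<sigma> (fst z) + \<sigma> (snd z)"]) simp
  finally show ?thesis .
qed

lemma inj_on_fst_fixed_sum_mod:
  fixes p c :: nat
  shows "inj_on fst {w \<in> {..<p} \<times> {..<p}. [fst w + snd w = c] (mod p)}"
proof
  fix v w
  assume v: "v \<in> {w \<in> {..<p} \<times> {..<p}. [fst w + snd w = c] (mod p)}"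
    and w: "w \<in> {w \<in> {..<p} \<times> {..<p}. [fst w + snd w = c] (mod p)}"
    and fst_eq: "fst v = fst w"
  have "[fst w + snd v = fst w + snd w] (mod p)"
    using v w fst_eq by (metis (mono_tags, lifting) cong_sym cong_trans mem_Collect_eq)
  then have "[snd v = snd w] (mod p)" by (simp add: cong_add_lcancel_nat)
  then have "snd v = snd w" using v w by (auto intro: cong_less_modulus_unique_nat)
  then show "v = w" using fst_eq by (simp add: prod_eq_iff)
qed

lemma card_fixed_sum_mod_le:
  fixes p c :: nat
  shows "card {w \<in> {..<p} \<times> {..<p}. [fst w + snd w = c] (mod p)} \<le> p"
proof -
  have "card {w \<in> {..<p} \<times> {..<p}. [fst w + snd w = c] (mod p)}
      = card (fst ` {w \<in> {..<p} \<times> {..<p}. [fst w + snd w = c] (mod p)})"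
    by (simp add: card_image inj_on_fst_fixed_sum_mod)
  also have "\<dots> \<le> card {..<p}" by (rule card_mono) auto
  finally show ?thesis by simp
qed

lemma card_sum_collision_le:
  "card {w \<in> {..<p} \<times> {..<p}. sum_collision p \<sigma> z w} \<le> p"
  by (rule order.trans[OF card_mono card_fixed_sum_mod_le[of p "fst z + snd z"]])
     (auto simp: sum_collision_def intro: cong_sym)

section \<open>Polynomial roots modulo a prime\<close>

lemma dvd_coeff_mult_right:
  fixes f g :: "'a::comm_semiring_1 poly"
  assumes "\<And>i. d dvd coeff g i"
  shows "d dvd coeff (f * g) n"
  by (simp add: coeff_mult assms dvd_sum)

definition roots_mod :: "nat \<Rightarrow> int poly \<Rightarrow> nat set" where
  "roots_mod p f = {x \<in> {..<p}. int p dvd poly f (int x)}"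

lemma finite_roots_mod [simp]: "finite (roots_mod p f)"
  by (simp add: roots_mod_def)

lemma synthetic_div_coeff_not_dvd:
  assumes "int p dvd poly f c" "\<exists>i. \<not> int p dvd coeff f i"
  shows "\<exists>i. \<not> int p dvd coeff (synthetic_div f c) i"
proof (rule ccontr)
  assume "\<not> ?thesis"
  then have "int p dvd coeff ([:- c, 1:] * synthetic_div f c + [:poly f c:]) i" for i
    using assms(1) by (auto simp: coeff_pCons' intro: dvd_coeff_mult_right split: nat.split)
  then have "int p dvd coeff f i" for i by (simp only: synthetic_div_correct')
  with assms(2) show False by blast
qed

lemma roots_mod_subset_synthetic_div:
  assumes "prime p" "r \<in> roots_mod p f"
  shows "roots_mod p f \<subseteq> insert r (roots_mod p (synthetic_div f (int r)))"
proof
  fix x assume x: "x \<in> roots_mod p f"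
  show "x \<in> insert r (roots_mod p (synthetic_div f (int r)))"
  proof (cases "x = r")
    case False
    then have "\<not> [x = r] (mod p)"
      using x assms(2) cong_less_modulus_unique_nat by (auto simp: roots_mod_def)
    then have "\<not> int p dvd int x - int r"
      by (simp add: cong_iff_dvd_diff [symmetric] cong_int_iff)
    moreover have "poly f (int x) = (int x - int r) * poly (synthetic_div f (int r)) (int x) + poly f (int r)"
      by (subst synthetic_div_correct' [symmetric, of f "int r"]) (simp add: algebra_simps)
    then have "int p dvd (int x - int r) * poly (synthetic_div f (int r)) (int x)"
      using x assms(2) by (simp add: roots_mod_def dvd_add_left_iff)
    ultimately show ?thesis
      using x assms(1) by (simp add: roots_mod_def prime_dvd_mult_iff)
  qed simp
qed

lemma card_roots_mod_le_degree:
  assumes "prime p" "\<exists>i. \<not> int p dvd coeff f i"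
  shows "card (roots_mod p f) \<le> degree f"
  using assms(2)
proof (induction "degree f" arbitrary: f rule: less_induct)
  case less
  show ?case
  proof (cases "roots_mod p f = {}")
    case False
    then obtain r where r: "r \<in> roots_mod p f" by auto
    define g where "g = synthetic_div f (int r)"
    have g: "\<exists>i. \<not> int p dvd coeff g i"
      using r less.prems by (simp add: g_def roots_mod_def synthetic_div_coeff_not_dvd)
    then have "g \<noteq> 0" by auto
    then have deg: "degree g < degree f"
      by (simp add: g_def degree_synthetic_div synthetic_div_eq_0_iff)
    have "card (roots_mod p f) \<le> card (insert r (roots_mod p g))"
      using roots_mod_subset_synthetic_div[OF assms(1) r] by (intro card_mono) (simp_all add: g_def)
    also have "\<dots> \<le> Suc (card (roots_mod p g))"
      by (simp add: card_insert_if)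
    also have "\<dots> \<le> degree f" using less.hyps[OF deg g] deg by simp
    finally show ?thesis .
  qed simp
qed

lemma coeff_linear_power_neg_pred:
  fixes a :: "'a::comm_ring_1"
  shows "coeff ([:a, -1:] ^ Suc n) n = of_nat (Suc n) * a * (-1) ^ n"
proof (induction n)
  case (Suc n)
  have "coeff ([:a, -1:] ^ Suc (Suc n)) (Suc n)
      = a * coeff ([:a, -1:] ^ Suc n) (Suc n) - coeff ([:a, -1:] ^ Suc n) n"
    by (simp del: power_Suc add: power_Suc[of _ "Suc n"])
  also have "\<dots> = of_nat (Suc (Suc n)) * a * (-1) ^ Suc n"
    by (simp only: Suc.IH coeff_linear_power_neg) (simp add: algebra_simps)
  finally show ?case .
qed simp

(* Substituting y = c - x into x^k + y^k = d. *)
definition collision_poly :: "nat \<Rightarrow> int \<Rightarrow> int \<Rightarrow> int poly" where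
  "collision_poly k c d = monom 1 k + [:c, -1:] ^ k - [:d:]"

lemma poly_collision_poly: "poly (collision_poly k c d) x = x ^ k + (c - x) ^ k - d"
  by (simp add: collision_poly_def poly_monom)

lemma degree_collision_poly_le: "degree (collision_poly k c d) \<le> k"
  unfolding collision_poly_def
  by (intro degree_diff_le degree_add_le order.trans[OF degree_power_le])
     (auto simp: degree_monom_le)

lemma coeff_collision_poly_pred:
  assumes "2 \<le> k"
  shows "coeff (collision_poly k c d) (k - 1) = int k * c * (-1) ^ (k - 1)"
proof -
  have k: "k = Suc (k - 1)" using assms by simp
  have "coeff ([:c, -1:] ^ k) (k - 1) = int k * c * (-1) ^ (k - 1)"
    by (subst k, subst coeff_linear_power_neg_pred) (use k in simp)
  moreover have "coeff [:d:] (k - 1) = 0" "coeff (monom 1 k) (k - 1) = 0"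
    using assms by (auto simp: coeff_pCons coeff_monom split: nat.split)
  ultimately show ?thesis by (simp add: collision_poly_def)
qed

(* For odd k the leading terms cancel, so it is the coefficient of x^(k-1) that shows the
   polynomial does not vanish mod p. *)
lemma coeff_collision_poly_not_dvd:
  assumes "prime p" "2 \<le> k" "k < p" "\<not> p dvd c"
  shows "\<not> int p dvd coeff (collision_poly k (int c) d) (k - 1)"
proof -
  have "prime (int p)" using assms(1) by simp
  moreover have "\<not> int p dvd int k" using assms(2,3) by (auto dest: dvd_imp_le)
  moreover have "\<not> int p dvd int c" using assms(4) by simp
  ultimately have "\<not> int p dvd int k * int c" by (simp add: prime_dvd_mult_iff)
  moreover have "is_unit ((-1 :: int) ^ (k - 1))" by simp
  ultimately show ?thesis
    by (simp only: coeff_collision_poly_pred[OF assms(2)] dvd_mult_unit_iff not_False_eq_True)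
qed

section \<open>Power maps modulo a prime\<close>

lemma cong_pow_prime_exp:
  fixes x :: nat
  assumes "prime p" "0 < m" "[m = 1] (mod (p - 1))"
  shows "[x ^ m = x] (mod p)"
proof -
  have "p - 1 dvd m - 1" using assms(2,3) by (simp add: cong_altdef_nat)
  then obtain j where "m - 1 = (p - 1) * j" by blast
  then have m: "m = (p - 1) * j + 1" using assms(2) by simp
  show ?thesis
  proof (cases "p dvd x")
    case True
    then have "p dvd x ^ m" using assms(2) by (meson dvd_power dvd_trans)
    then show ?thesis using True by (simp add: cong_def dvd_imp_mod_0)
  next
    case False
    have "x ^ m = (x ^ (p - 1)) ^ j * x" by (simp add: m power_add power_mult)
    also have "[\<dots> = 1 ^ j * x] (mod p)"
      by (intro cong_mult cong_pow cong_refl fermat_theorem assms(1) False)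
    finally show ?thesis by simp
  qed
qed

lemma cong_pow_prime_cancel:
  fixes x y :: nat
  assumes "prime p" "0 < k" "coprime k (p - 1)" "[x ^ k = y ^ k] (mod p)"
  shows "[x = y] (mod p)"
proof -
  obtain k' where k': "[k * k' = 1] (mod (p - 1))"
    using cong_solve_coprime_nat[OF assms(3)] by auto
  define m where "m = k * (k' + (p - 1))"
  have "[m = 1] (mod (p - 1))"
    using cong_add[OF k' cong_mult_self_right[of k "p - 1"]] by (simp add: m_def algebra_simps)
  moreover have "0 < m" using assms(1,2) prime_gt_1_nat by (simp add: m_def)
  ultimately have "[x = x ^ m] (mod p)" "[y ^ m = y] (mod p)"
    using cong_pow_prime_exp[OF assms(1)] by (auto simp: cong_sym)
  moreover have "[x ^ m = y ^ m] (mod p)"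
    unfolding m_def power_mult by (rule cong_pow[OF assms(4)])
  ultimately show ?thesis by (meson cong_trans)
qed

lemma bij_betw_mult_mod:
  fixes t p :: nat
  assumes "coprime t p"
  shows "bij_betw (\<lambda>x. (t * x) mod p) {..<p} {..<p}"
proof -
  have inj: "inj_on (\<lambda>x. (t * x) mod p) {..<p}"
  proof
    fix x y assume "x \<in> {..<p}" "y \<in> {..<p}" "(t * x) mod p = (t * y) mod p"
    then show "x = y"
      using assms by (simp add: cong_def [symmetric] cong_mult_lcancel_nat cong_less_modulus_unique_nat)
  qed
  moreover have "(\<lambda>x. (t * x) mod p) ` {..<p} = {..<p}"
    using inj by (intro endo_inj_surj) auto
  ultimately show ?thesis by (simp add: bij_betw_def)
qed

locale power_map =
  fixes p a k :: nat
  assumes prime_p: "prime p"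
    and a_pos: "0 < a" and a_less: "a < p"
    and two_le_k: "2 \<le> k" and k_less: "k < p"
    and coprime_k: "coprime k (p - 1)"
begin

abbreviation \<sigma> :: "nat \<Rightarrow> nat" where
  "\<sigma> \<equiv> eta p a k"

lemma p_pos: "0 < p"
  using k_less by simp

lemma coprime_less_p: "0 < t \<Longrightarrow> t < p \<Longrightarrow> coprime t p"
  using prime_p by (simp add: coprime_commute prime_imp_coprime nat_dvd_not_less)

lemma eta_less: "\<sigma> x < p"
  using p_pos by (simp add: eta_def)

lemma eta_cong: "[\<sigma> x = a * x ^ k] (mod p)"
  by (simp add: eta_def cong_def)

lemma inj_on_eta: "inj_on \<sigma> {..<p}"
proof
  fix x y assume xy: "x \<in> {..<p}" "y \<in> {..<p}" "\<sigma> x = \<sigma> y"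
  then have "[a * x ^ k = a * y ^ k] (mod p)" unfolding eta_def cong_def by simp
  then have "[x ^ k = y ^ k] (mod p)" using cong_mult_lcancel_nat[OF coprime_less_p[OF a_pos a_less]] by blast
  then have "[x = y] (mod p)"
    by (rule cong_pow_prime_cancel[OF prime_p _ coprime_k, rotated]) (use two_le_k in simp)
  then show "x = y" using xy by (simp add: cong_less_modulus_unique_nat)
qed

lemma sum_collision_imp_root:
  assumes "sum_collision p \<sigma> z (x, y)"
  shows "int p dvd poly (collision_poly k (int (fst z + snd z)) (int (fst z) ^ k + int (snd z) ^ k)) (int x)"
proof -
  define c where "c = int (fst z + snd z)"
  have "[c = int x + int y] (mod int p)"
    using assms by (simp add: sum_collision_def c_def cong_int_iff [symmetric])
  then have "[c - int x = int x + int y - int x] (mod int p)"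
    by (intro cong_diff cong_refl)
  then have y: "[int y = c - int x] (mod int p)"
    by (simp add: cong_sym)
  have "[int a * (int (fst z) ^ k + int (snd z) ^ k) = int (\<sigma> (fst z)) + int (\<sigma> (snd z))] (mod int p)"
    using eta_cong by (simp add: distrib_left cong_add cong_sym cong_int_iff [symmetric])
  also have "[int (\<sigma> (fst z)) + int (\<sigma> (snd z)) = int (\<sigma> x) + int (\<sigma> y)] (mod int p)"
    using assms by (simp add: sum_collision_def cong_int_iff [symmetric])
  also have "[int (\<sigma> x) + int (\<sigma> y) = int a * (int x ^ k + int y ^ k)] (mod int p)"
    using eta_cong by (simp add: distrib_left cong_add cong_int_iff [symmetric])
  also have "[int a * (int x ^ k + int y ^ k) = int a * (int x ^ k + (c - int x) ^ k)] (mod int p)"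
    by (intro cong_mult cong_add cong_refl cong_pow y)
  finally have "[int (fst z) ^ k + int (snd z) ^ k = int x ^ k + (c - int x) ^ k] (mod int p)"
    using coprime_less_p[OF a_pos a_less] by (simp add: cong_mult_lcancel)
  then show ?thesis
    by (simp add: c_def poly_collision_poly cong_iff_dvd_diff dvd_diff_commute)
qed

lemma card_sum_collision_le_k:
  assumes "\<not> p dvd fst z + snd z"
  shows "card {w \<in> {..<p} \<times> {..<p}. sum_collision p \<sigma> z w} \<le> k"
proof -
  define f where "f = collision_poly k (int (fst z + snd z)) (int (fst z) ^ k + int (snd z) ^ k)"
  let ?W = "{w \<in> {..<p} \<times> {..<p}. sum_collision p \<sigma> z w}"
  have "inj_on fst ?W"
    by (rule inj_on_subset[OF inj_on_fst_fixed_sum_mod[of p "fst z + snd z"]])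
       (auto simp: sum_collision_def intro: cong_sym)
  then have "card ?W = card (fst ` ?W)" by (simp add: card_image)
  also have "\<dots> \<le> card (roots_mod p f)"
    unfolding f_def roots_mod_def using sum_collision_imp_root by (intro card_mono) auto
  also have "\<dots> \<le> degree f"
    using coeff_collision_poly_not_dvd[OF prime_p two_le_k k_less assms]
    by (intro card_roots_mod_le_degree prime_p) (auto simp: f_def)
  also have "\<dots> \<le> k" by (simp add: f_def degree_collision_poly_le)
  finally show ?thesis .
qed

lemma graph_energy_le: "graph_energy p \<sigma> \<le> (k + 1) * p ^ 2"
proof -
  let ?P = "{..<p} \<times> {..<p}"
  have "{(z, w) \<in> ?P \<times> ?P. sum_collision p \<sigma> z w} = Sigma ?P (\<lambda>z. {w \<in> ?P. sum_collision p \<sigma> z w})"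
    by auto
  then have "graph_energy p \<sigma> = (\<Sum>z\<in>?P. card {w \<in> ?P. sum_collision p \<sigma> z w})"
    by (simp add: graph_energy_def card_SigmaI)
  also have "\<dots> \<le> (\<Sum>z\<in>?P. k + (if p dvd fst z + snd z then p else 0))"
    by (intro sum_mono) (simp add: card_sum_collision_le card_sum_collision_le_k trans_le_add2)
  also have "\<dots> = p ^ 2 * k + p * card {z \<in> ?P. [fst z + snd z = 0] (mod p)}"
    by (simp add: sum.distrib sum.If_cases Int_def cong_0_iff power2_eq_square)
  also have "\<dots> \<le> p ^ 2 * k + p * p"
    using card_fixed_sum_mod_le[of p 0] by simp
  finally show ?thesis by (simp add: power2_eq_square algebra_simps)
qed

lemma dilate_phase_cong:
  "[r * ((t * x) mod p) + s * \<sigma> ((t * x) mod p) = (r * t) mod p * x + (s * t ^ k) mod p * \<sigma> x] (mod p)"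
proof -
  have tx: "[(t * x) mod p = t * x] (mod p)" by (simp add: cong_def)
  have "[\<sigma> ((t * x) mod p) = a * ((t * x) mod p) ^ k] (mod p)" by (rule eta_cong)
  also have "[a * ((t * x) mod p) ^ k = a * (t * x) ^ k] (mod p)"
    by (intro cong_mult cong_refl cong_pow tx)
  finally have "[r * ((t * x) mod p) + s * \<sigma> ((t * x) mod p) = r * (t * x) + s * (a * (t * x) ^ k)] (mod p)"
    by (intro cong_add cong_mult cong_refl tx)
  also have "r * (t * x) + s * (a * (t * x) ^ k) = (r * t) * x + (s * t ^ k) * (a * x ^ k)"
    by (simp add: power_mult_distrib ac_simps)
  also have "[\<dots> = (r * t) mod p * x + (s * t ^ k) mod p * \<sigma> x] (mod p)"
    using cong_sym[OF eta_cong] by (intro cong_add cong_mult cong_refl) (simp_all add: cong_def)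
  finally show ?thesis .
qed

lemma graph_fourier_dilate:
  assumes "coprime t p"
  shows "graph_fourier p \<sigma> ((r * t) mod p) ((s * t ^ k) mod p) = graph_fourier p \<sigma> r s"
proof -
  have "graph_fourier p \<sigma> ((r * t) mod p) ((s * t ^ k) mod p)
      = (\<Sum>x<p. ep p (int (r * ((t * x) mod p) + s * \<sigma> ((t * x) mod p))))"
    using ep_cong_nat[OF dilate_phase_cong] by (simp add: graph_fourier_def)
  also have "\<dots> = (\<Sum>y<p. ep p (int (r * y + s * \<sigma> y)))"
    by (rule sum.reindex_bij_betw[OF bij_betw_mult_mod[OF assms]])
  also have "\<dots> = graph_fourier p \<sigma> r s"
    by (simp add: graph_fourier_def)
  finally show ?thesis .
qed

lemma inj_on_dilation:
  assumes "r < p" "s < p" "(r, s) \<noteq> (0, 0)"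
  shows "inj_on (\<lambda>t. ((r * t) mod p, (s * t ^ k) mod p)) {1..<p}"
proof
  fix t t' assume tt': "t \<in> {1..<p}" "t' \<in> {1..<p}"
    "((r * t) mod p, (s * t ^ k) mod p) = ((r * t') mod p, (s * t' ^ k) mod p)"
  have "[t = t'] (mod p)"
  proof (cases "r = 0")
    case False
    then have "[r * t = r * t'] (mod p)" using tt' by (simp add: cong_def)
    then show ?thesis using coprime_less_p[of r] False assms(1) by (simp add: cong_mult_lcancel_nat)
  next
    case True
    then have "s \<noteq> 0" using assms(3) by simp
    with tt' have "[s * t ^ k = s * t' ^ k] (mod p)" by (simp add: cong_def)
    then have "[t ^ k = t' ^ k] (mod p)"
      using coprime_less_p[of s] \<open>s \<noteq> 0\<close> assms(2) by (simp add: cong_mult_lcancel_nat)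
    then show ?thesis
      by (rule cong_pow_prime_cancel[OF prime_p _ coprime_k, rotated]) (use two_le_k in simp)
  qed
  then show "t = t'" using tt' by (simp add: cong_less_modulus_unique_nat)
qed

lemma orbit_pow4_le_fourth_moment:
  assumes "r < p" "s < p" "(r, s) \<noteq> (0, 0)"
  shows "real (p - 1) * norm (graph_fourier p \<sigma> r s) ^ 4
    \<le> (\<Sum>r'<p. \<Sum>s'<p. norm (graph_fourier p \<sigma> r' s') ^ 4)"
proof -
  define h where "h t = ((r * t) mod p, (s * t ^ k) mod p)" for t
  define g where "g z = norm (graph_fourier p \<sigma> (fst z) (snd z)) ^ 4" for z
  have "real (p - 1) * norm (graph_fourier p \<sigma> r s) ^ 4 = (\<Sum>t\<in>{1..<p}. g (h t))"
    using graph_fourier_dilate coprime_less_p by (simp add: g_def h_def)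
  also have "\<dots> = (\<Sum>z\<in>h ` {1..<p}. g z)"
    using inj_on_dilation[OF assms] by (intro sum.reindex_cong[symmetric]) (simp_all add: h_def)
  also have "\<dots> \<le> (\<Sum>z\<in>{..<p} \<times> {..<p}. g z)"
    by (rule sum_mono2) (auto simp: h_def g_def p_pos)
  also have "\<dots> = (\<Sum>r'<p. \<Sum>s'<p. norm (graph_fourier p \<sigma> r' s') ^ 4)"
    by (simp add: sum.cartesian_product g_def split_def)
  finally show ?thesis .
qed

lemma norm_graph_fourier_pow4_le:
  assumes "r < p" "s < p" "(r, s) \<noteq> (0, 0)"
  shows "norm (graph_fourier p \<sigma> r s) ^ 4 \<le> 2 * (real k + 1) * real p ^ 3"
proof -
  have p1: "real p \<le> 2 * real (p - 1)" using prime_gt_1_nat[OF prime_p] by linarith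
  have "real (p - 1) * norm (graph_fourier p \<sigma> r s) ^ 4 \<le> real p ^ 2 * real (graph_energy p \<sigma>)"
    using orbit_pow4_le_fourth_moment[OF assms] fourth_moment_graph_fourier[OF p_pos] by simp
  also have "\<dots> \<le> real p ^ 2 * ((real k + 1) * real p ^ 2)"
    using of_nat_mono[OF graph_energy_le, where 'a = real] by (intro mult_left_mono) (simp_all add: algebra_simps)
  also have "\<dots> = real p * ((real k + 1) * real p ^ 3)"
    by (simp add: power2_eq_square power3_eq_cube)
  also have "\<dots> \<le> (2 * real (p - 1)) * ((real k + 1) * real p ^ 3)"
    using p1 by (intro mult_right_mono) simp_all
  also have "\<dots> = real (p - 1) * (2 * (real k + 1) * real p ^ 3)"
    by simp
  finally show ?thesis using prime_gt_1_nat[OF prime_p] by simp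
qed

lemma perm_discrepancy_eta_le:
  "perm_discrepancy p \<sigma> \<le> root 4 (2 * (real k + 1) * real p ^ 3) * (4 + 3 * ln (real p)) ^ 2"
proof (rule perm_discrepancy_le[OF p_pos])
  fix I J assume I: "zn_interval p I" and J: "zn_interval p J"
  define M where "M = root 4 (2 * (real k + 1) * real p ^ 3)"
  define L where "L = real p * (4 + 3 * ln (real p))"
  have M: "norm (graph_fourier p \<sigma> r s) \<le> M" if "r < p" "s < p" "(r, s) \<noteq> (0, 0)" for r s
    using real_root_le_mono[OF _ norm_graph_fourier_pow4_le[OF that], of 4]
    by (simp add: M_def real_root_power_cancel)
  have sub: "I \<subseteq> {..<p}" "J \<subseteq> {..<p}"
    using I J p_pos by (auto simp: zn_interval_def)
  have "discr p J (\<sigma> ` I)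
      \<le> M * (\<Sum>r<p. norm (set_fourier p I r)) * (\<Sum>s<p. norm (set_fourier p J s)) / real p ^ 2"
    using M by (intro discr_image_le p_pos eta_less inj_on_eta sub) (simp_all add: M_def)
  also have "\<dots> \<le> M * L * L / real p ^ 2"
    using sum_norm_set_fourier_interval_le[OF p_pos I] sum_norm_set_fourier_interval_le[OF p_pos J] p_pos
    by (intro divide_right_mono mult_mono mult_left_mono) (simp_all add: M_def L_def sum_nonneg)
  also have "\<dots> = M * (4 + 3 * ln (real p)) ^ 2"
    using p_pos by (simp add: L_def power2_eq_square)
  finally show "discr p J (\<sigma> ` I) \<le> root 4 (2 * (real k + 1) * real p ^ 3) * (4 + 3 * ln (real p)) ^ 2"
    by (simp add: M_def)
qed

end

section \<open>Asymptotics\<close>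

lemma discrepancy_bound_le_eps:
  fixes K P \<epsilon> :: real
  assumes P: "3 \<le> P" and K: "1 \<le> K" "K \<le> \<epsilon> ^ 4 / (4 * 7 ^ 8) * (P / ln P ^ 8)" and \<epsilon>: "0 < \<epsilon>"
  shows "root 4 (2 * (K + 1) * P ^ 3) * (4 + 3 * ln P) ^ 2 \<le> \<epsilon> * P"
proof -
  have "exp 1 \<le> P" using exp_le P by linarith
  then have lnP: "1 \<le> ln P" using P by (simp add: ln_ge_iff)
  have "(root 4 (2 * (K + 1) * P ^ 3) * (4 + 3 * ln P) ^ 2) ^ 4 = 2 * (K + 1) * P ^ 3 * (4 + 3 * ln P) ^ 8"
    using P K by (simp add: power_mult_distrib flip: power_mult)
  also have "\<dots> \<le> 2 * (2 * K) * P ^ 3 * (7 * ln P) ^ 8"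
    using P K lnP by (intro mult_mono power_mono) auto
  also have "\<dots> \<le> 2 * (2 * (\<epsilon> ^ 4 / (4 * 7 ^ 8) * (P / ln P ^ 8))) * P ^ 3 * (7 * ln P) ^ 8"
    using P K by (intro mult_right_mono mult_left_mono) auto
  also have "\<dots> = (\<epsilon> * P) ^ 4"
    using lnP by (simp add: field_simps power_mult_distrib) (simp add: power_Suc [symmetric] del: power_Suc)
  finally show ?thesis
    using P K \<epsilon> by (simp add: power_mono_iff)
qed

lemma smallo_of_discrepancy_bound:
  fixes D K P :: "nat \<Rightarrow> real"
  assumes D: "\<And>n. 0 \<le> D n" "\<And>n. D n \<le> root 4 (2 * (K n + 1) * P n ^ 3) * (4 + 3 * ln (P n)) ^ 2"
    and K: "\<And>n. 1 \<le> K n" "K \<in> o(\<lambda>n. P n / ln (P n) ^ 8)"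
    and P: "filterlim P at_top sequentially"
  shows "D \<in> o(P)"
proof (rule landau_o.smallI)
  fix \<epsilon> :: real assume \<epsilon>: "\<epsilon> > 0"
  have "\<forall>\<^sub>F n in sequentially. norm (K n) \<le> \<epsilon> ^ 4 / (4 * 7 ^ 8) * norm (P n / ln (P n) ^ 8)"
    using \<epsilon> by (intro landau_o.smallD[OF K(2)]) simp
  moreover have "\<forall>\<^sub>F n in sequentially. 3 \<le> P n"
    using P by (simp add: filterlim_at_top)
  ultimately show "\<forall>\<^sub>F n in sequentially. norm (D n) \<le> \<epsilon> * norm (P n)"
  proof eventually_elim
    case (elim n)
    then have "K n \<le> \<epsilon> ^ 4 / (4 * 7 ^ 8) * (P n / ln (P n) ^ 8)"
      using K(1)[of n] by (simp add: abs_mult power_even_abs)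
    then have "D n \<le> \<epsilon> * P n"
      using order.trans[OF D(2) discrepancy_bound_le_eps[OF elim(2) K(1) _ \<epsilon>]] by blast
    then show ?case using D(1)[of n] elim(2) by simp
  qed
qed

theorem mainTheorem9:
  fixes p a k :: "nat \<Rightarrow> nat"
  assumes p_prime: "\<And>n. prime (p n)"
    and p_inf: "filterlim p at_top sequentially"
    and a_unit: "\<And>n. 0 < a n \<and> a n < p n"
    and k_range: "\<And>n. 2 \<le> k n \<and> k n \<le> p n - 2"
    and k_coprime: "\<And>n. gcd (k n) (p n - 1) = 1"
    and k_small: "(\<lambda>n. real (k n)) \<in> o[sequentially](\<lambda>n. real (p n) / (ln (real (p n))) ^ 8)"
  shows "(\<lambda>n. perm_discrepancy (p n) (eta (p n) (a n) (k n))) \<in> o[sequentially](\<lambda>n. real (p n))"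
proof (rule smallo_of_discrepancy_bound)
  fix n
  interpret power_map "p n" "a n" "k n"
  proof
    show "prime (p n)" "0 < a n" "a n < p n" "2 \<le> k n" "k n < p n"
      using p_prime a_unit[of n] k_range[of n] by auto
    show "coprime (k n) (p n - 1)"
      using k_coprime[of n] coprime_iff_gcd_eq_1 by blast
  qed
  show "0 \<le> perm_discrepancy (p n) (eta (p n) (a n) (k n))"
    by (rule perm_discrepancy_nonneg[OF p_pos])
  show "perm_discrepancy (p n) (eta (p n) (a n) (k n))
      \<le> root 4 (2 * (real (k n) + 1) * real (p n) ^ 3) * (4 + 3 * ln (real (p n))) ^ 2"
    by (rule perm_discrepancy_eta_le)
  show "1 \<le> real (k n)" using two_le_k by simp
qed (use k_small filterlim_compose[OF filterlim_real_sequentially p_inf] in simp_all)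

end
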